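(* Assume the random gather-step setting below. Then for every coordinate $i\in\{1,\dots,d\}$ and every choice of the Byzantine vectors $z^{(j)}=z^{(j)}(X)$ as (arbitrary) functions of the delivering configuration $X$, $$\mathbb{E}\big[\Delta_i(\theta_1,\dots,\theta_h)\big]\le\Big(1-\frac{\rho}{4}\Big)\Delta_i(\lambda_1,\dots,\lambda_h),$$ where the expectation is over $X$.
   Context: Median of reals: for $y_1,\dots,y_q\in\mathbb{R}$ with order statistics $y_{(1)}\le\dots\le y_{(q)}$, $\mathrm{median}=y_{((q+1)/2)}$ if $q$ is odd and $\frac12(y_{(q/2)}+y_{(q/2+1)})$ if $q$ is even; $\mathrm{Median}$ of vectors is applied coordinate-wise. Coordinate-wise diameters: $\Delta_i(v_1,\dots,v_h)=\max_{j,k}|v_j[i]-v_k[i]|$, $\Delta=\sum_i\Delta_i$. Random gather-step setting: integers $f\ge1$, $n$, $h=n-f$, and $q$ with $2f+2\le q\le\lfloor h/2\rfloor$; fixed vectors $\lambda_1,\dots,\lambda_h\in\mathbb{R}^d$ held by the correct servers $1,\dots,h$. Let $S_j=\{s\subset\{1,\dots,h\}\setminus\{j\}:|s|\in\{q-f-1,\dots,q-1\}\}$ and $S=\prod_{j=1}^hS_j$. A delivering configuration $X=(X_1,\dots,X_h)$ is a random element of $S$ with $P(X=s)\ge\rho$ for all $s\in S$, for some $\rho>0$. Given $X$, each correct server $j$ receives arbitrary vectors $z^{(j)}_1,\dots,z^{(j)}_{q-1-|X_j|}\in\mathbb{R}^d$ (possibly depending on $X$) and computes $\theta_j=\mathrm{Median}\big(\lambda_j,(\lambda_k)_{k\in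 X_j},z^{(j)}_1,\dots,z^{(j)}_{q-1-|X_j|}\big)$. *)

theory Defs
  imports "HOL-Probability.Probability"
begin

text \<open>Median of a list of reals (order statistics, 1-indexed in the paper):
  odd length q: y_((q+1)/2); even length q: (y_(q/2) + y_(q/2+1)) / 2.\<close>
definition median :: "real list \<Rightarrow> real" where
  "median ys = (let zs = sort ys; q = length ys in
     if odd q then zs ! (q div 2)
     else (zs ! (q div 2 - 1) + zs ! (q div 2)) / 2)"

definition Median :: "(real ^ 'd) list \<Rightarrow> real ^ 'd" where
  "Median vs = (\<chi> i. median (map (\<lambda>v. v $ i) vs))"

definition coord_diam :: "nat \<Rightarrow> (nat \<Rightarrow> real ^ 'd) \<Rightarrow> 'd \<Rightarrow> real" where
  "coord_diam h v i = Max {\<bar>v j $ i - v k $ i\<bar> | j k. j \<in> {1..h} \<and> k \<in> {1..h}}"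

definition diam :: "nat \<Rightarrow> (nat \<Rightarrow> real ^ 'd) \<Rightarrow> real" where
  "diam h v = (\<Sum>i\<in>UNIV. coord_diam h v i)"

definition Sj :: "nat \<Rightarrow> nat \<Rightarrow> nat \<Rightarrow> nat \<Rightarrow> nat set set" where
  "Sj h q f j = {s. s \<subseteq> {1..h} - {j} \<and> q - f - 1 \<le> card s \<and> card s \<le> q - 1}"

definition Sconf :: "nat \<Rightarrow> nat \<Rightarrow> nat \<Rightarrow> (nat \<Rightarrow> nat set) set" where
  "Sconf h q f = (\<Pi>\<^sub>E j\<in>{1..h}. Sj h q f j)"

text \<open>theta_j given configuration X, correct vectors lam, and Byzantine vectors
  z X j m (m < q - 1 - |X_j|).\<close>
definition theta :: "nat \<Rightarrow> (nat \<Rightarrow> real ^ 'd) \<Rightarrow>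
    ((nat \<Rightarrow> nat set) \<Rightarrow> nat \<Rightarrow> nat \<Rightarrow> real ^ 'd) \<Rightarrow> (nat \<Rightarrow> nat set) \<Rightarrow> nat \<Rightarrow> real ^ 'd" where
  "theta q lam z X j = Median ([lam j] @ map lam (sorted_list_of_set (X j))
       @ map (z X j) [0..<q - 1 - card (X j)])"

end

theory Submission
  imports Defs
begin

text \<open>A median of q values stays inside any interval [a, b] that misses at most
  (q - 1) div 2 of them on either side. The Byzantine inputs of server j number
  q - 1 - |X_j| \<le> f \<le> (q - 1) div 2, so every \<theta>_j lies in the range of the correct
  vectors, and the coordinate diameter never grows. Split that range at its midpoint:
  one half contains at least h/2 \<ge> q correct values, so there is a configuration
  in which every server hears only from q - 1 servers in that half. Then at most one
  of its q inputs (its own) lies outside the half, all \<theta>_j fall into it, and the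
  diameter is halved. This configuration has probability at least \<rho>, which gives
  E[\<Delta>_i(\<theta>)] \<le> (1 - \<rho>/2) \<Delta>_i(\<lambda>).\<close>

lemma sorted_nth_ge_if_few_less:
  fixes xs :: "'a::linorder list"
  assumes "sorted xs" "k < length xs" "length (filter (\<lambda>y. y < a) xs) \<le> k"
  shows "a \<le> xs ! k"
proof (rule ccontr)
  assume "\<not> a \<le> xs ! k"
  then have "\<forall>m\<le>k. xs ! m < a" using assms(1,2)
    by (meson le_less_trans not_le_imp_less order_less_le_trans sorted_nth_mono)
  then have "{0..k} \<subseteq> {m. m < length xs \<and> xs ! m < a}" using assms(2) by auto
  then have "card {0..k} \<le> card {m. m < length xs \<and> xs ! m < a}"
    by (intro card_mono) auto
  then show False using assms(3) by (simp add: length_filter_conv_card)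
qed

lemma sorted_nth_le_if_few_greater:
  fixes xs :: "'a::linorder list"
  assumes "sorted xs" "m < length xs" "length (filter (\<lambda>y. y > b) xs) < length xs - m"
  shows "xs ! m \<le> b"
proof (rule ccontr)
  assume "\<not> xs ! m \<le> b"
  then have "\<forall>k. m \<le> k \<and> k < length xs \<longrightarrow> xs ! k > b" using assms(1,2)
    by (meson less_le_trans not_le_imp_less sorted_nth_mono)
  then have "{m..<length xs} \<subseteq> {k. k < length xs \<and> xs ! k > b}" by auto
  then have "card {m..<length xs} \<le> card {k. k < length xs \<and> xs ! k > b}"
    by (intro card_mono) auto
  then show False using assms(3) by (simp add: length_filter_conv_card)
qed

lemma length_filter_sort: "length (filter P (sort ys)) = length (filter P ys)"
  by (metis mset_filter mset_sort size_mset)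

lemma median_between:
  fixes ys :: "real list"
  assumes "ys \<noteq> []"
    and "length (filter (\<lambda>y. y < a) ys) \<le> (length ys - 1) div 2"
    and "length (filter (\<lambda>y. y > b) ys) \<le> (length ys - 1) div 2"
  shows "a \<le> median ys \<and> median ys \<le> b"
proof -
  define zs where "zs = sort ys"
  define q where "q = length ys"
  have s: "sorted zs" and l: "length zs = q" by (auto simp: zs_def q_def)
  have q1: "q \<ge> 1" using assms(1) by (simp add: q_def Suc_le_eq)
  have c1: "length (filter (\<lambda>y. y < a) zs) \<le> (q - 1) div 2"
    using assms(2) by (simp add: zs_def q_def length_filter_sort)
  have c2: "length (filter (\<lambda>y. y > b) zs) \<le> (q - 1) div 2"
    using assms(3) by (simp add: zs_def q_def length_filter_sort)
  show ?thesis
  proof (cases "odd q")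
    case True
    then obtain r where r: "q = 2 * r + 1" by (auto elim!: oddE)
    have "a \<le> zs ! r"
      by (rule sorted_nth_ge_if_few_less[OF s]) (use c1 l r in auto)
    moreover have "zs ! r \<le> b"
      by (rule sorted_nth_le_if_few_greater[OF s]) (use c2 l r in auto)
    ultimately show ?thesis using r by (simp add: median_def zs_def q_def Let_def)
  next
    case False
    then obtain r where r: "q = 2 * r" by (auto elim!: evenE)
    with q1 have r1: "r \<ge> 1" by simp
    have "a \<le> zs ! (r - 1)" "a \<le> zs ! r"
      by (rule sorted_nth_ge_if_few_less[OF s]; use c1 l r r1 in auto)+
    moreover have "zs ! (r - 1) \<le> b" "zs ! r \<le> b"
      by (rule sorted_nth_le_if_few_greater[OF s]; use c2 l r r1 in auto)+
    ultimately show ?thesis using False r by (simp add: median_def zs_def q_def Let_def)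
  qed
qed

lemma theta_between:
  fixes lam :: "nat \<Rightarrow> real ^ 'd"
  assumes "finite (X j)" "card (X j) \<le> q - 1" "q \<ge> 1"
    and "length (filter (\<lambda>y. y < a) (map (\<lambda>k. lam k $ i) (j # sorted_list_of_set (X j))))
          + (q - 1 - card (X j)) \<le> (q - 1) div 2"
    and "length (filter (\<lambda>y. y > b) (map (\<lambda>k. lam k $ i) (j # sorted_list_of_set (X j))))
          + (q - 1 - card (X j)) \<le> (q - 1) div 2"
  shows "a \<le> theta q lam z X j $ i \<and> theta q lam z X j $ i \<le> b"
proof -
  define A where "A = map (\<lambda>k. lam k $ i) (j # sorted_list_of_set (X j))"
  define B where "B = map (\<lambda>m. z X j m $ i) [0..<q - 1 - card (X j)]"
  have "theta q lam z X j $ i = median (A @ B)"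
    by (simp add: theta_def Median_def A_def B_def o_def)
  moreover have len: "length (A @ B) = q" using assms(1-3) by (simp add: A_def B_def)
  moreover have "length B = q - 1 - card (X j)" by (simp add: B_def)
  then have "length (filter (\<lambda>y. y < a) (A @ B)) \<le> (q - 1) div 2"
    and "length (filter (\<lambda>y. y > b) (A @ B)) \<le> (q - 1) div 2"
    using assms(4,5) length_filter_le[of "\<lambda>y. y < a" B] length_filter_le[of "\<lambda>y. y > b" B]
    unfolding A_def[symmetric] by simp_all
  ultimately show ?thesis
    using median_between[of "A @ B" a b] assms(3) by force
qed

lemma coord_diam_le:
  fixes v :: "nat \<Rightarrow> real ^ 'd"
  assumes "h \<ge> 1" "\<forall>j\<in>{1..h}. a \<le> v j $ i \<and> v j $ i \<le> b"
  shows "coord_diam h v i \<le> b - a"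
  unfolding coord_diam_def
proof (rule Max.boundedI)
  show "finite {\<bar>v j $ i - v k $ i\<bar> |j k. j \<in> {1..h} \<and> k \<in> {1..h}}"
    by (rule finite_image_set2) auto
  show "{\<bar>v j $ i - v k $ i\<bar> |j k. j \<in> {1..h} \<and> k \<in> {1..h}} \<noteq> {}"
    using assms(1) by auto
next
  fix x assume "x \<in> {\<bar>v j $ i - v k $ i\<bar> |j k. j \<in> {1..h} \<and> k \<in> {1..h}}"
  then obtain j k where x: "x = \<bar>v j $ i - v k $ i\<bar>" and "j \<in> {1..h}" "k \<in> {1..h}"
    by blast
  with assms(2) have "a \<le> v j $ i" "v j $ i \<le> b" "a \<le> v k $ i" "v k $ i \<le> b" by auto
  then show "x \<le> b - a" unfolding x by (simp add: abs_le_iff)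
qed

lemma coord_diam_ge:
  fixes v :: "nat \<Rightarrow> real ^ 'd"
  assumes "j \<in> {1..h}" "k \<in> {1..h}"
  shows "v j $ i - v k $ i \<le> coord_diam h v i"
proof -
  have "\<bar>v j $ i - v k $ i\<bar> \<le> coord_diam h v i"
    unfolding coord_diam_def by (rule Max_ge[OF finite_image_set2]) (use assms in auto)
  then show ?thesis by linarith
qed

lemma coord_diam_eq_Max_minus_Min:
  fixes v :: "nat \<Rightarrow> real ^ 'd"
  assumes "h \<ge> 1"
  shows "coord_diam h v i = Max ((\<lambda>k. v k $ i) ` {1..h}) - Min ((\<lambda>k. v k $ i) ` {1..h})"
proof -
  let ?V = "(\<lambda>k. v k $ i) ` {1..h}"
  have ne: "?V \<noteq> {}" using assms by auto
  have fin: "finite ?V" by simp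
  obtain kx where "kx \<in> {1..h}" "Max ?V = v kx $ i" using Max_in[OF fin ne] by blast
  moreover obtain kn where "kn \<in> {1..h}" "Min ?V = v kn $ i" using Min_in[OF fin ne] by blast
  ultimately have "Max ?V - Min ?V \<le> coord_diam h v i"
    using coord_diam_ge[of kx h kn v i] by simp
  moreover have "coord_diam h v i \<le> Max ?V - Min ?V"
    by (rule coord_diam_le[OF assms]) auto
  ultimately show ?thesis by linarith
qed

lemma Sconf_memberD:
  assumes "X \<in> Sconf h q f" "j \<in> {1..h}"
  shows "X j \<subseteq> {1..h} - {j}" "finite (X j)" "q - f - 1 \<le> card (X j)" "card (X j) \<le> q - 1"
proof -
  have "X j \<in> Sj h q f j" using assms by (auto simp: Sconf_def PiE_iff)
  then show "X j \<subseteq> {1..h} - {j}" "q - f - 1 \<le> card (X j)" "card (X j) \<le> q - 1"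
    by (auto simp: Sj_def)
  then show "finite (X j)" by (meson finite_Diff finite_atLeastAtMost finite_subset)
qed

lemma finite_Sconf: "finite (Sconf h q f)"
  unfolding Sconf_def
  by (rule finite_PiE) (auto simp: Sj_def intro: finite_subset[of _ "Pow {1..h}"])

lemma Sconf_exists_within:
  assumes "G \<subseteq> {1..h}" "q \<le> card G"
  shows "\<exists>X\<in>Sconf h q f. \<forall>j\<in>{1..h}. X j \<subseteq> G - {j} \<and> card (X j) = q - 1"
proof -
  have "finite G" using assms(1) finite_subset by blast
  have "\<exists>T. T \<subseteq> G - {j} \<and> card T = q - 1" for j
  proof -
    have "q - 1 \<le> card (G - {j})"
      using assms(2) \<open>finite G\<close> by (auto simp: card_Diff_singleton_if)
    then show ?thesis by (meson obtain_subset_with_card_n)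
  qed
  then have choice: "(SOME T. T \<subseteq> G - {j} \<and> card T = q - 1) \<subseteq> G - {j}
      \<and> card (SOME T. T \<subseteq> G - {j} \<and> card T = q - 1) = q - 1" for j
    by (rule someI_ex)
  define X where "X = restrict (\<lambda>j. SOME T. T \<subseteq> G - {j} \<and> card T = q - 1) {1..h}"
  have "X \<in> Sconf h q f"
    using choice assms(1) by (auto simp: X_def Sconf_def Sj_def)
  moreover have "\<forall>j\<in>{1..h}. X j \<subseteq> G - {j} \<and> card (X j) = q - 1"
    using choice by (simp add: X_def)
  ultimately show ?thesis by blast
qed

lemma exists_half_width_subset:
  fixes v :: "nat \<Rightarrow> real"
  assumes "finite A" "2 * q \<le> card A" "\<forall>k\<in>A. a \<le> v k \<and> v k \<le> b"
  shows "\<exists>G lo hi. G \<subseteq> A \<and> q \<le> card G \<and> (\<forall>k\<in>G. lo \<le> v k \<and> v k \<le> hi)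
           \<and> hi - lo \<le> (b - a) / 2"
proof -
  define mid where "mid = (a + b) / 2"
  define L where "L = {k \<in> A. v k \<le> mid}"
  define U where "U = {k \<in> A. mid \<le> v k}"
  have "L \<union> U = A" by (auto simp: L_def U_def)
  then have "card A \<le> card L + card U" by (metis card_Un_le)
  then consider "q \<le> card L" | "q \<le> card U" using assms(2) by linarith
  then show ?thesis
  proof cases
    case 1
    then have "L \<subseteq> A \<and> q \<le> card L \<and> (\<forall>k\<in>L. a \<le> v k \<and> v k \<le> mid) \<and> mid - a \<le> (b - a) / 2"
      using assms(3) by (auto simp: L_def mid_def)
    then show ?thesis by blast
  next
    case 2
    then have "U \<subseteq> A \<and> q \<le> card U \<and> (\<forall>k\<in>U. mid \<le> v k \<and> v k \<le> b) \<and> b - mid \<le> (b - a) / 2"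
      using assms(3) by (auto simp: U_def mid_def field_simps)
    then show ?thesis by blast
  qed
qed

lemma coord_diam_theta_le_range:
  assumes "X \<in> Sconf h q f" "h \<ge> 1" "2 * f + 2 \<le> q"
    and "\<forall>k\<in>{1..h}. a \<le> lam k $ i \<and> lam k $ i \<le> b"
  shows "coord_diam h (theta q lam z X) i \<le> b - a"
proof (rule coord_diam_le[OF assms(2)], intro ballI)
  fix j assume j: "j \<in> {1..h}"
  note X = Sconf_memberD[OF assms(1) j]
  have "\<forall>k\<in>set (j # sorted_list_of_set (X j)). a \<le> lam k $ i \<and> lam k $ i \<le> b"
    using X j assms(4) by auto
  then have "filter (\<lambda>y. y < a) (map (\<lambda>k. lam k $ i) (j # sorted_list_of_set (X j))) = []"
    and "filter (\<lambda>y. y > b) (map (\<lambda>k. lam k $ i) (j # sorted_list_of_set (X j))) = []"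
    by (auto simp: filter_empty_conv)
  moreover have "q - 1 - card (X j) \<le> (q - 1) div 2" using X(3) assms(3) by linarith
  ultimately show "a \<le> theta q lam z X j $ i \<and> theta q lam z X j $ i \<le> b"
    by (intro theta_between) (use X assms(3) in auto)
qed

lemma coord_diam_theta_le_within:
  assumes "finite G" "h \<ge> 1" "q \<ge> 3"
    and "\<forall>j\<in>{1..h}. X j \<subseteq> G - {j} \<and> card (X j) = q - 1"
    and "\<forall>k\<in>G. lo \<le> lam k $ i \<and> lam k $ i \<le> hi"
  shows "coord_diam h (theta q lam z X) i \<le> hi - lo"
proof (rule coord_diam_le[OF assms(2)], intro ballI)
  fix j assume j: "j \<in> {1..h}"
  have X: "X j \<subseteq> G - {j}" "card (X j) = q - 1" using assms(4) j by auto
  then have fin: "finite (X j)" using assms(1) finite_subset by blast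
  have "\<forall>k\<in>set (sorted_list_of_set (X j)). lo \<le> lam k $ i \<and> lam k $ i \<le> hi"
    using X fin assms(5) by auto
  then have "filter (\<lambda>y. y < lo) (map (\<lambda>k. lam k $ i) (sorted_list_of_set (X j))) = []"
    and "filter (\<lambda>y. y > hi) (map (\<lambda>k. lam k $ i) (sorted_list_of_set (X j))) = []"
    by (auto simp: filter_empty_conv)
  then have "length (filter (\<lambda>y. y < lo) (map (\<lambda>k. lam k $ i) (j # sorted_list_of_set (X j)))) \<le> 1"
    and "length (filter (\<lambda>y. y > hi) (map (\<lambda>k. lam k $ i) (j # sorted_list_of_set (X j)))) \<le> 1"
    by simp_all
  then show "lo \<le> theta q lam z X j $ i \<and> theta q lam z X j $ i \<le> hi"
    by (intro theta_between) (use X fin assms(3) in auto)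
qed

lemma expectation_le_if_halved_at:
  fixes p :: "'a pmf" and g :: "'a \<Rightarrow> real"
  assumes "finite (set_pmf p)" "\<forall>x\<in>set_pmf p. g x \<le> W" "g x0 \<le> W / 2"
  shows "measure_pmf.expectation p g \<le> (1 - pmf p x0 / 2) * W"
proof -
  define A where "A = insert x0 (set_pmf p)"
  have finA: "finite A" and x0: "x0 \<in> A" using assms(1) by (auto simp: A_def)
  have "(\<Sum>x\<in>A. pmf p x) = 1" by (rule sum_pmf_eq_1[OF finA]) (auto simp: A_def)
  then have mass: "(\<Sum>x\<in>A - {x0}. pmf p x) = 1 - pmf p x0" by (simp add: sum.remove[OF finA x0])
  have "measure_pmf.expectation p g = (\<Sum>x\<in>A. g x * pmf p x)"
    by (rule integral_measure_pmf_real[OF finA]) (simp add: A_def)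
  also have "\<dots> = g x0 * pmf p x0 + (\<Sum>x\<in>A - {x0}. g x * pmf p x)"
    by (rule sum.remove[OF finA x0])
  also have "\<dots> \<le> W / 2 * pmf p x0 + (\<Sum>x\<in>A - {x0}. W * pmf p x)"
    using assms(2,3) by (intro add_mono sum_mono mult_right_mono) (auto simp: A_def)
  also have "\<dots> = W / 2 * pmf p x0 + W * (1 - pmf p x0)"
    by (simp only: sum_distrib_left[symmetric] mass)
  also have "\<dots> = (1 - pmf p x0 / 2) * W" by (simp add: algebra_simps)
  finally show ?thesis .
qed

theorem mainTheorem5:
  fixes f n h q :: nat and lam :: "nat \<Rightarrow> real ^ 'd" and \<rho> :: real
    and p :: "(nat \<Rightarrow> nat set) pmf"
    and z :: "(nat \<Rightarrow> nat set) \<Rightarrow> nat \<Rightarrow> nat \<Rightarrow> real ^ 'd"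
    and i :: 'd
  assumes "f \<ge> 1" and "h = n - f"
    and "2 * f + 2 \<le> q" and "q \<le> h div 2"
    and "\<rho> > 0"
    and "set_pmf p \<subseteq> Sconf h q f"
    and "\<forall>s\<in>Sconf h q f. pmf p s \<ge> \<rho>"
  shows "measure_pmf.expectation p (\<lambda>X. coord_diam h (theta q lam z X) i)
           \<le> (1 - \<rho> / 4) * coord_diam h lam i"
proof -
  define a where "a = Min ((\<lambda>k. lam k $ i) ` {1..h})"
  define b where "b = Max ((\<lambda>k. lam k $ i) ` {1..h})"
  have h1: "h \<ge> 1" using assms(1,3,4) by linarith
  have D: "coord_diam h lam i = b - a"
    unfolding a_def b_def by (rule coord_diam_eq_Max_minus_Min[OF h1])
  have range: "\<forall>k\<in>{1..h}. a \<le> lam k $ i \<and> lam k $ i \<le> b" by (auto simp: a_def b_def)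
  have "2 * q \<le> card {1..h}" using assms(4) by simp
  then obtain G lo hi where G: "G \<subseteq> {1..h}" "q \<le> card G"
      "\<forall>k\<in>G. lo \<le> lam k $ i \<and> lam k $ i \<le> hi" "hi - lo \<le> (b - a) / 2"
    using exists_half_width_subset[OF finite_atLeastAtMost _ range] by blast
  obtain X0 where X0: "X0 \<in> Sconf h q f" "\<forall>j\<in>{1..h}. X0 j \<subseteq> G - {j} \<and> card (X0 j) = q - 1"
    using Sconf_exists_within[OF G(1,2)] by blast
  have "coord_diam h (theta q lam z X0) i \<le> hi - lo"
    by (rule coord_diam_theta_le_within[OF _ h1 _ X0(2) G(3)])
      (use finite_subset[OF G(1)] assms(1,3) in auto)
  then have "coord_diam h (theta q lam z X0) i \<le> (b - a) / 2" using G(4) by linarith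
  moreover have "\<forall>X\<in>set_pmf p. coord_diam h (theta q lam z X) i \<le> b - a"
    using coord_diam_theta_le_range[OF _ h1 assms(3) range] assms(6) by blast
  ultimately have "measure_pmf.expectation p (\<lambda>X. coord_diam h (theta q lam z X) i)
                     \<le> (1 - pmf p X0 / 2) * (b - a)"
    by (intro expectation_le_if_halved_at) (auto intro: finite_subset[OF assms(6) finite_Sconf])
  also have "\<dots> \<le> (1 - \<rho> / 4) * (b - a)"
    using assms(5,7) X0(1) range h1 by (intro mult_right_mono) fastforce+
  finally show ?thesis unfolding D .
qed

end
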